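(* Let $A,B,C,D,E,F$ be real numbers such that the $8\times 8$ matrix $$\gamma=\begin{pmatrix}\mathcal A&\mathcal C\\ \mathcal C&\mathcal B\end{pmatrix},\quad \mathcal A=\mathrm{diag}(A,B,A,B),\ \mathcal B=\mathrm{diag}(C,D,C,D),\ \mathcal C=\begin{pmatrix}E&0&0&0\\0&0&0&-F\\0&0&-E&0\\0&-F&0&0\end{pmatrix}$$ is the covariance matrix of a four-mode Gaussian state (the generalized Werner–Wolf state), where modes 1,2 form party $A$ and modes 3,4 form party $B$. This state is separable with respect to the bipartition (modes 1,2)$|$(modes 3,4) if and only if $$(AC-E^2)(BD-F^2)-2|EF|-CD-AB+1\geq 0.$$
   Context: Quadratures are ordered as $(\hat x_1,\hat p_1,\hat x_2,\hat p_2,\hat x_3,\hat p_3,\hat x_4,\hat p_4)$ with $[\hat R_j,\hat R_l]=i\sigma_{jl}$, $\sigma=\begin{pmatrix}0&1\\-1&0\end{pmatrix}^{\oplus 4}$. The covariance matrix is $\gamma_{ij}=\langle \hat R_i\hat R_j+\hat R_j\hat R_i\rangle-2\langle\hat R_i\rangle\langle\hat R_j\rangle$ (vacuum has covariance matrix $I$), and $\gamma$ is a valid covariance matrix iff $\gamma+i\sigma\ge 0$. *)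

theory Defs
  imports Complex_Main "HOL-Library.Complex_Order"
begin

text \<open>Real (2n x 2n) matrices are represented as functions nat => nat => real,
  only entries with indices < 2n are relevant. Index k (0-based) corresponds to
  quadrature R_(k+1), ordering (x1,p1,x2,p2,...).\<close>

definition sympl :: "nat \<Rightarrow> nat \<Rightarrow> real" where
  "sympl i j = (if even i \<and> j = i + 1 then 1 else if odd i \<and> i = j + 1 then -1 else 0)"

definition sym_mat :: "nat \<Rightarrow> (nat \<Rightarrow> nat \<Rightarrow> real) \<Rightarrow> bool" where
  "sym_mat m G \<longleftrightarrow> (\<forall>i<m. \<forall>j<m. G i j = G j i)"

definition valid_cm :: "nat \<Rightarrow> (nat \<Rightarrow> nat \<Rightarrow> real) \<Rightarrow> bool" where
  "valid_cm n G \<longleftrightarrow> sym_mat (2*n) G \<and>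
     (\<forall>z :: nat \<Rightarrow> complex.
        0 \<le> (\<Sum>i<2*n. \<Sum>j<2*n. cnj (z i) * (complex_of_real (G i j) + \<i> * complex_of_real (sympl i j)) * z j))"

definition mat_ge :: "nat \<Rightarrow> (nat \<Rightarrow> nat \<Rightarrow> real) \<Rightarrow> (nat \<Rightarrow> nat \<Rightarrow> real) \<Rightarrow> bool" where
  "mat_ge m M N \<longleftrightarrow> (\<forall>x :: nat \<Rightarrow> real. 0 \<le> (\<Sum>i<m. \<Sum>j<m. x i * (M i j - N i j) * x j))"

definition block_diag :: "nat \<Rightarrow> (nat \<Rightarrow> nat \<Rightarrow> real) \<Rightarrow> (nat \<Rightarrow> nat \<Rightarrow> real) \<Rightarrow> nat \<Rightarrow> nat \<Rightarrow> real" where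
  "block_diag k GA GB i j =
     (if i < k \<and> j < k then GA i j
      else if k \<le> i \<and> k \<le> j then GB (i - k) (j - k) else 0)"

text \<open>Separability of a Gaussian state with covariance matrix G of nA+nB modes with
  respect to the bipartition (first nA modes | last nB modes), via the
  Werner--Wolf characterisation: there exist valid covariance matrices
  GA, GB of the parties with G >= GA (+) GB.\<close>
definition gaussian_separable :: "nat \<Rightarrow> nat \<Rightarrow> (nat \<Rightarrow> nat \<Rightarrow> real) \<Rightarrow> bool" where
  "gaussian_separable nA nB G \<longleftrightarrow>
     (\<exists>GA GB. valid_cm nA GA \<and> valid_cm nB GB \<and>
        mat_ge (2*(nA+nB)) G (block_diag (2*nA) GA GB))"

definition ww_cm :: "real \<Rightarrow> real \<Rightarrow> real \<Rightarrow> real \<Rightarrow> real \<Rightarrow> real \<Rightarrow> nat \<Rightarrow> nat \<Rightarrow> real" where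
  "ww_cm A B C D E F i j =
     (if i < 8 \<and> j < 8 then
       [[A, 0, 0, 0,  E, 0, 0, 0],
        [0, B, 0, 0,  0, 0, 0, -F],
        [0, 0, A, 0,  0, 0, -E, 0],
        [0, 0, 0, B,  0, -F, 0, 0],
        [E, 0, 0, 0,  C, 0, 0, 0],
        [0, 0, 0, -F, 0, D, 0, 0],
        [0, 0, -E, 0, 0, 0, C, 0],
        [0, -F, 0, 0, 0, 0, 0, D]] ! i ! j
      else 0)"

end

theory Submission
  imports Defs
begin

text \<open>Write \<open>X = [[A, E], [E, C]]\<close>, \<open>Y = [[B, \<plusminus>F], [\<plusminus>F, D]]\<close>.
  Necessity: if \<open>\<gamma> \<ge> \<gamma>\<^sub>A \<oplus> \<gamma>\<^sub>B\<close>, adding suitable 2 \<times> 2 minors of \<open>\<gamma> - \<gamma>\<^sub>A \<oplus> \<gamma>\<^sub>B\<close>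
  to the single-mode uncertainty relations of \<open>\<gamma>\<^sub>A\<close> and \<open>\<gamma>\<^sub>B\<close> shows that
  \<open>[[X, I], [I, Y]]\<close> is positive semidefinite for both signs; by a Schur complement argument
  this forces \<open>det (X Y - I) \<ge> 0\<close>, which for the sign with \<open>\<plusminus>E F = \<bar>E F\<bar>\<close> is the criterion.

  Sufficiency: take \<open>\<gamma>\<^sub>A = diag (a, 1/a, a, 1/a)\<close>, \<open>\<gamma>\<^sub>B = diag (c, 1/c, c, 1/c)\<close>.
  Then \<open>\<gamma> - \<gamma>\<^sub>A \<oplus> \<gamma>\<^sub>B\<close> splits into 2 \<times> 2 blocks, and with \<open>h = B D - F\<^sup>2\<close>,
  \<open>a = (D + s)/h\<close>, \<open>c = (B + t)/h\<close> the block conditions become \<open>F\<^sup>2 \<le> s t\<close> and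
  \<open>h\<^sup>2 E\<^sup>2 \<le> (P - s)(R - t)\<close> with \<open>P = h A - D\<close>, \<open>R = h C - B\<close>.  Since
  \<open>P R - (h \<bar>E\<bar> + \<bar>F\<bar>)\<^sup>2\<close> is \<open>h\<close> times the left-hand side of the criterion, splitting
  \<open>P\<close> and \<open>R\<close> in the ratio \<open>\<bar>F\<bar> : h \<bar>E\<bar>\<close> gives suitable \<open>s\<close>, \<open>t\<close>.\<close>

lemma double_sum_antisym_eq_0:
  fixes T :: "nat \<Rightarrow> nat \<Rightarrow> real"
  assumes "\<And>i j. i < m \<Longrightarrow> j < m \<Longrightarrow> T j i = - T i j"
  shows "(\<Sum>i<m. \<Sum>j<m. T i j) = 0"
proof -
  have "(\<Sum>i<m. \<Sum>j<m. T i j) = (\<Sum>j<m. \<Sum>i<m. T i j)" by (rule sum.swap)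
  also have "\<dots> = (\<Sum>j<m. \<Sum>i<m. - T j i)"
    by (intro sum.cong refl) (metis assms lessThan_iff minus_minus)
  also have "\<dots> = - (\<Sum>j<m. \<Sum>i<m. T j i)" by (simp only: sum_negf)
  finally show ?thesis by simp
qed

lemma double_sum_support:
  fixes T :: "nat \<Rightarrow> nat \<Rightarrow> 'a::comm_monoid_add"
  assumes "S \<subseteq> {..<m}" and "\<And>i j. i \<notin> S \<or> j \<notin> S \<Longrightarrow> T i j = 0"
  shows "(\<Sum>i<m. \<Sum>j<m. T i j) = (\<Sum>i\<in>S. \<Sum>j\<in>S. T i j)"
proof -
  have "(\<Sum>i<m. \<Sum>j<m. T i j) = (\<Sum>i\<in>S. \<Sum>j<m. T i j)"
    by (rule sum.mono_neutral_right) (use assms in auto)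
  also have "\<dots> = (\<Sum>i\<in>S. \<Sum>j\<in>S. T i j)"
    by (intro sum.cong refl sum.mono_neutral_right) (use assms in auto)
  finally show ?thesis .
qed

definition cm_form :: "nat \<Rightarrow> (nat \<Rightarrow> nat \<Rightarrow> real) \<Rightarrow> (nat \<Rightarrow> real) \<Rightarrow> (nat \<Rightarrow> real) \<Rightarrow> real" where
  "cm_form m G xi eta = (\<Sum>i<m. \<Sum>j<m. (xi i * xi j + eta i * eta j) * G i j
      - (xi i * eta j - eta i * xi j) * sympl i j)"

lemma sympl_antisym: "sympl j i = - sympl i j"
  by (auto simp: sympl_def)

lemma hermitian_form_eq_cm_form:
  assumes "sym_mat m G"
  shows "(\<Sum>i<m. \<Sum>j<m. cnj (z i) * (complex_of_real (G i j) + \<i> * complex_of_real (sympl i j)) * z j)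
     = complex_of_real (cm_form m G (\<lambda>k. Re (z k)) (\<lambda>k. Im (z k)))"
    (is "(\<Sum>i<m. \<Sum>j<m. ?h i j) = _")
proof (rule complex_eqI)
  have Re_h: "Re (?h i j) = (Re (z i) * Re (z j) + Im (z i) * Im (z j)) * G i j
      - (Re (z i) * Im (z j) - Im (z i) * Re (z j)) * sympl i j" for i j
    by (simp add: algebra_simps)
  have Im_h: "Im (?h i j) = (Re (z i) * Im (z j) - Im (z i) * Re (z j)) * G i j
      + (Re (z i) * Re (z j) + Im (z i) * Im (z j)) * sympl i j" for i j
    by (simp add: algebra_simps)
  show "Re (\<Sum>i<m. \<Sum>j<m. ?h i j) = Re (complex_of_real (cm_form m G (\<lambda>k. Re (z k)) (\<lambda>k. Im (z k))))"
    by (simp only: cm_form_def Re_sum Re_h Re_complex_of_real)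
  have "(\<Sum>i<m. \<Sum>j<m. Im (?h i j)) = 0"
  proof (rule double_sum_antisym_eq_0)
    fix i j assume "i < m" "j < m"
    then have "G j i = G i j" using assms unfolding sym_mat_def by blast
    then show "Im (?h j i) = - Im (?h i j)"
      unfolding Im_h sympl_antisym[of i j] by (simp add: algebra_simps)
  qed
  then show "Im (\<Sum>i<m. \<Sum>j<m. ?h i j) = Im (complex_of_real (cm_form m G (\<lambda>k. Re (z k)) (\<lambda>k. Im (z k))))"
    by (simp only: Im_sum Im_complex_of_real)
qed

lemma valid_cm_iff_cm_form:
  "valid_cm n G \<longleftrightarrow> sym_mat (2*n) G \<and> (\<forall>xi eta. 0 \<le> cm_form (2*n) G xi eta)"
proof -
  have "(\<forall>z. 0 \<le> cm_form (2*n) G (\<lambda>k. Re (z k)) (\<lambda>k. Im (z k)))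
      \<longleftrightarrow> (\<forall>xi eta. 0 \<le> cm_form (2*n) G xi eta)"
  proof (intro iffI allI)
    fix xi eta :: "nat \<Rightarrow> real"
    assume "\<forall>z. 0 \<le> cm_form (2*n) G (\<lambda>k. Re (z k)) (\<lambda>k. Im (z k))"
    then show "0 \<le> cm_form (2*n) G xi eta"
      by (elim allE[where x = "\<lambda>k. Complex (xi k) (eta k)"]) simp
  qed simp
  moreover have "0 \<le> complex_of_real r \<longleftrightarrow> 0 \<le> r" for r
    by (simp add: less_eq_complex_def)
  ultimately show ?thesis
    unfolding valid_cm_def by (auto simp: hermitian_form_eq_cm_form)
qed

lemma valid_cm_imp_mat_ge_0:
  assumes "valid_cm n G"
  shows "mat_ge (2*n) G (\<lambda>i j. 0)"
  unfolding mat_ge_def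
proof
  fix x :: "nat \<Rightarrow> real"
  have "0 \<le> cm_form (2*n) G x (\<lambda>_. 0)"
    using assms unfolding valid_cm_iff_cm_form by blast
  then show "0 \<le> (\<Sum>i<2*n. \<Sum>j<2*n. x i * (G i j - 0) * x j)"
    by (simp add: cm_form_def ac_simps)
qed

lemma valid_cm_mode_ineq:
  assumes "valid_cm n G" and "k < n"
  shows "0 \<le> G (2*k) (2*k) * y * y + G (2*k+1) (2*k+1) * w * w - 2 * y * w"
proof -
  let ?xi = "\<lambda>i. if i = 2*k then y else 0"
  let ?eta = "\<lambda>i. if i = 2*k+1 then w else 0"
  have "0 \<le> cm_form (2*n) G ?xi ?eta"
    using assms(1) unfolding valid_cm_iff_cm_form by blast
  also have "cm_form (2*n) G ?xi ?eta = (\<Sum>i\<in>{2*k, 2*k+1}. \<Sum>j\<in>{2*k, 2*k+1}.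
      (?xi i * ?xi j + ?eta i * ?eta j) * G i j - (?xi i * ?eta j - ?eta i * ?xi j) * sympl i j)"
    unfolding cm_form_def by (rule double_sum_support) (use assms(2) in auto)
  also have "\<dots> = G (2*k) (2*k) * y * y + G (2*k+1) (2*k+1) * w * w - 2 * y * w"
    by (simp add: sympl_def algebra_simps)
  finally show ?thesis .
qed

lemma mat_ge_on_pair:
  assumes "mat_ge m M N" and "i < m" "j < m" "i \<noteq> j"
  shows "0 \<le> p*p*(M i i - N i i) + p*q*(M i j - N i j) + q*p*(M j i - N j i) + q*q*(M j j - N j j)"
proof -
  let ?x = "\<lambda>k. if k = i then p else if k = j then q else 0"
  have "0 \<le> (\<Sum>a<m. \<Sum>b<m. ?x a * (M a b - N a b) * ?x b)"
    using assms(1) unfolding mat_ge_def by (rule spec)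
  also have "\<dots> = (\<Sum>a\<in>{i,j}. \<Sum>b\<in>{i,j}. ?x a * (M a b - N a b) * ?x b)"
    by (rule double_sum_support) (use assms in auto)
  also have "\<dots> = p*p*(M i i - N i i) + p*q*(M i j - N i j) + q*p*(M j i - N j i) + q*q*(M j j - N j j)"
    using assms(4) by (simp add: algebra_simps)
  finally show ?thesis .
qed

lemma binary_form_nonneg_D:
  fixes p q r :: real
  assumes form: "\<And>u v. 0 \<le> p*u*u + 2*q*u*v + r*v*v"
  shows "0 \<le> p" "0 \<le> r" "q^2 \<le> p*r"
proof -
  show p: "0 \<le> p" using form[of 1 0] by simp
  show "0 \<le> r" using form[of 0 1] by simp
  show "q^2 \<le> p*r"
  proof (cases "p = 0")
    case True
    have "q = 0"
    proof (rule ccontr)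
      assume "q \<noteq> 0"
      then have "p*(-(r+1)/(2*q))*(-(r+1)/(2*q)) + 2*q*(-(r+1)/(2*q))*1 + r*1*1 = -1"
        using True by (simp add: field_simps)
      then show False using form[of "-(r+1)/(2*q)" 1] by simp
    qed
    then show ?thesis using True by simp
  next
    case False
    have "0 \<le> p*q*q + 2*q*q*(-p) + r*(-p)*(-p)" by (rule form)
    also have "\<dots> = p * (p*r - q^2)" by (simp add: algebra_simps power2_eq_square)
    finally show ?thesis using p False by (simp add: zero_le_mult_iff)
  qed
qed

lemma binary_form_nonneg_I:
  fixes p q r u v :: real
  assumes "0 \<le> p" "0 \<le> r" "q^2 \<le> p*r"
  shows "0 \<le> p*u*u + 2*q*u*v + r*v*v"
proof (cases "p = 0")
  case True
  with assms have "q = 0" by simp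
  with True assms show ?thesis by (simp add: mult.assoc)
next
  case False
  have "p * (p*u*u + 2*q*u*v + r*v*v) = (p*u + q*v)^2 + (p*r - q^2)*v^2"
    by (simp add: algebra_simps power2_eq_square)
  also have "\<dots> \<ge> 0" using assms by simp
  finally show ?thesis using assms False by (simp add: zero_le_mult_iff)
qed

text \<open>In the next two lemmas the hypothesis says that \<open>[[X, I], [I, Y]]\<close> is positive
  semidefinite, where \<open>X = [[A, E], [E, C]]\<close> and \<open>Y = [[B, f], [f, D]]\<close>; the conclusion
  of the second is \<open>det (X Y - I) \<ge> 0\<close>.\<close>

lemma block_form_nonneg_imp_det_pos:
  fixes A B C D E f :: real
  assumes form: "\<And>y1 y2 z1 z2. 0 \<le> A*y1*y1 + 2*E*y1*y2 + C*y2*y2 + B*z1*z1 + 2*f*z1*z2 + D*z2*z2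
      + 2*y1*z1 + 2*y2*z2"
  shows "0 < A*C - E^2"
proof -
  have "0 \<le> A*u*u + 2*1*u*v + B*v*v" for u v
    using form[of u 0 v 0] by (simp add: algebra_simps)
  from binary_form_nonneg_D[OF this] have A: "0 < A" by (cases "A = 0") auto
  have "0 \<le> A*u*u + 2*E*u*v + C*v*v" for u v
    using form[of u v 0 0] by (simp add: algebra_simps)
  from binary_form_nonneg_D(3)[OF this] have "0 \<le> A*C - E^2" by simp
  moreover have "A*C - E^2 \<noteq> 0"
  proof
    assume g: "A*C - E^2 = 0"
    \<comment> \<open>then \<open>(-E, A)\<close> spans the kernel of \<open>X\<close>, and along \<open>y = l (-E, A)\<close>, \<open>z = m (-E, A)\<close>
       the form is linear in \<open>l\<close>\<close>
    define N where "N = E*E + A*A"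
    define K where "K = B*E*E - 2*f*E*A + D*A*A"
    define l where "l = -(K+1)"
    define m where "m = 2*N"
    have "0 \<le> A*(l*(-E))*(l*(-E)) + 2*E*(l*(-E))*(l*A) + C*(l*A)*(l*A) + B*(m*(-E))*(m*(-E))
       + 2*f*(m*(-E))*(m*A) + D*(m*A)*(m*A) + 2*(l*(-E))*(m*(-E)) + 2*(l*A)*(m*A)" by (rule form)
    also have "\<dots> = l*l*A*(A*C - E^2) + 2*l*m*N + m*m*K"
      unfolding N_def K_def by (simp add: algebra_simps power2_eq_square)
    also have "\<dots> = - 4*N*N" unfolding g l_def m_def by (simp add: algebra_simps)
    finally have "N*N \<le> 0" by simp
    moreover have "0 < N" unfolding N_def using A by (simp add: add_nonneg_pos)
    ultimately show False by (simp add: mult_le_0_iff)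
  qed
  ultimately show ?thesis by simp
qed

lemma block_form_nonneg_imp_det_nonneg:
  fixes A B C D E f :: real
  assumes form: "\<And>y1 y2 z1 z2. 0 \<le> A*y1*y1 + 2*E*y1*y2 + C*y2*y2 + B*z1*z1 + 2*f*z1*z2 + D*z2*z2
      + 2*y1*z1 + 2*y2*z2"
  shows "0 \<le> (A*C - E^2)*(B*D - f^2) - A*B - C*D - 2*E*f + 1"
proof -
  define g where "g = A*C - E^2"
  have g: "0 < g" unfolding g_def using assms by (rule block_form_nonneg_imp_det_pos)
  \<comment> \<open>with \<open>y = - adj X w\<close> and \<open>z = g w\<close> the form becomes \<open>g w\<^sup>T (g Y - adj X) w\<close>\<close>
  define n11 where "n11 = g*B - C"
  define n12 where "n12 = g*f + E"
  define n22 where "n22 = g*D - A"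
  have "0 \<le> n11*u*u + 2*n12*u*v + n22*v*v" for u v
  proof -
    have "0 \<le> A*(-(C*u - E*v))*(-(C*u - E*v)) + 2*E*(-(C*u - E*v))*(-(A*v - E*u))
      + C*(-(A*v - E*u))*(-(A*v - E*u)) + B*(g*u)*(g*u) + 2*f*(g*u)*(g*v) + D*(g*v)*(g*v)
      + 2*(-(C*u - E*v))*(g*u) + 2*(-(A*v - E*u))*(g*v)" by (rule form)
    also have "\<dots> = g * (n11*u*u + 2*n12*u*v + n22*v*v)"
      unfolding g_def n11_def n12_def n22_def by (simp add: algebra_simps power2_eq_square)
    finally show ?thesis using g by (simp add: zero_le_mult_iff)
  qed
  then have "n12^2 \<le> n11*n22" by (rule binary_form_nonneg_D)
  moreover have "n11*n22 - n12^2 = g * ((A*C - E^2)*(B*D - f^2) - A*B - C*D - 2*E*f + 1)"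
    unfolding g_def n11_def n12_def n22_def by (simp add: algebra_simps power2_eq_square)
  ultimately have "0 \<le> g * ((A*C - E^2)*(B*D - f^2) - A*B - C*D - 2*E*f + 1)" by simp
  then show ?thesis using g by (simp add: zero_le_mult_iff)
qed

lemma ww_cm_separable_imp:
  fixes A B C D E F f :: real
  assumes "gaussian_separable 2 2 (ww_cm A B C D E F)" and f: "f = F \<or> f = -F"
  shows "0 \<le> (A*C - E^2)*(B*D - f^2) - A*B - C*D - 2*E*f + 1"
proof -
  obtain GA GB where GA: "valid_cm 2 GA" and GB: "valid_cm 2 GB"
    and ge: "mat_ge 8 (ww_cm A B C D E F) (block_diag 4 GA GB)"
    using assms(1) unfolding gaussian_separable_def by auto
  have m1: "0 \<le> p*p*(A - GA 0 0) + 2*E*p*q + q*q*(C - GB 0 0)" for p q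
    using mat_ge_on_pair[OF ge, of 0 4 p q] by (simp add: ww_cm_def block_diag_def algebra_simps)
  have m2: "0 \<le> p*p*(A - GA 2 2) - 2*E*p*q + q*q*(C - GB 2 2)" for p q
    using mat_ge_on_pair[OF ge, of 2 6 p q] by (simp add: ww_cm_def block_diag_def algebra_simps)
  have m3: "0 \<le> p*p*(B - GA 1 1) + 2*f*p*q + q*q*(D - GB 3 3)" for p q
    using mat_ge_on_pair[OF ge, of 1 7 p q] mat_ge_on_pair[OF ge, of 1 7 p "-q"] f
    by (auto simp: ww_cm_def block_diag_def algebra_simps)
  have m4: "0 \<le> p*p*(B - GA 3 3) + 2*f*p*q + q*q*(D - GB 1 1)" for p q
    using mat_ge_on_pair[OF ge, of 3 5 p q] mat_ge_on_pair[OF ge, of 3 5 p "-q"] f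
    by (auto simp: ww_cm_def block_diag_def algebra_simps)
  have u1: "0 \<le> GA 0 0 * y * y + GA 1 1 * w * w - 2 * y * w"
   and u2: "0 \<le> GA 2 2 * y * y + GA 3 3 * w * w - 2 * y * w"
   and u3: "0 \<le> GB 0 0 * y * y + GB 1 1 * w * w - 2 * y * w"
   and u4: "0 \<le> GB 2 2 * y * y + GB 3 3 * w * w - 2 * y * w" for y w
    using valid_cm_mode_ineq[OF GA, of 0] valid_cm_mode_ineq[OF GA, of 1]
      valid_cm_mode_ineq[OF GB, of 0] valid_cm_mode_ineq[OF GB, of 1] by simp_all
  have "0 \<le> A*y1*y1 + 2*E*y1*y2 + C*y2*y2 + B*z1*z1 + 2*f*z1*z2 + D*z2*z2 + 2*y1*z1 + 2*y2*z2"
    for y1 y2 z1 z2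
  proof -
    \<comment> \<open>the entries of \<open>GA\<close> and \<open>GB\<close> cancel in this sum\<close>
    have "0 \<le> (y1*y1*(A - GA 0 0) + 2*E*y1*y2 + y2*y2*(C - GB 0 0))
      + (y1*y1*(A - GA 2 2) - 2*E*y1*(-y2) + (-y2)*(-y2)*(C - GB 2 2))
      + (z1*z1*(B - GA 1 1) + 2*f*z1*z2 + z2*z2*(D - GB 3 3))
      + (z1*z1*(B - GA 3 3) + 2*f*z1*z2 + z2*z2*(D - GB 1 1))
      + (GA 0 0 * y1 * y1 + GA 1 1 * (-z1) * (-z1) - 2 * y1 * (-z1))
      + (GA 2 2 * y1 * y1 + GA 3 3 * (-z1) * (-z1) - 2 * y1 * (-z1))
      + (GB 0 0 * y2 * y2 + GB 1 1 * (-z2) * (-z2) - 2 * y2 * (-z2))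
      + (GB 2 2 * y2 * y2 + GB 3 3 * (-z2) * (-z2) - 2 * y2 * (-z2))"
      using m1[of y1 y2] m2[of y1 "-y2"] m3[of z1 z2] m4[of z1 z2]
        u1[of y1 "-z1"] u2[of y1 "-z1"] u3[of y2 "-z2"] u4[of y2 "-z2"] by linarith
    also have "\<dots> = 2 * (A*y1*y1 + 2*E*y1*y2 + C*y2*y2 + B*z1*z1 + 2*f*z1*z2 + D*z2*z2
        + 2*y1*z1 + 2*y2*z2)"
      by (simp add: algebra_simps)
    finally show ?thesis by simp
  qed
  then show ?thesis by (rule block_form_nonneg_imp_det_nonneg)
qed

lemma ww_cm_valid_imp:
  fixes A B C D E F :: real
  assumes valid: "valid_cm 4 (ww_cm A B C D E F)"
  defines "h \<equiv> B*D - F^2"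
  shows "1 \<le> A*B" "0 \<le> B" "1 \<le> C*D" "0 \<le> D" "F^2 \<le> B*D"
    "0 \<le> h*(A*h - D)" "0 \<le> h*(C*h - B)"
proof -
  let ?G = "ww_cm A B C D E F"
  have "0 \<le> A*u*u + 2*(-1)*u*v + B*v*v" for u v
    using valid_cm_mode_ineq[OF valid, of 0 u v] by (simp add: ww_cm_def algebra_simps)
  from binary_form_nonneg_D[OF this] show "1 \<le> A*B" "0 \<le> B" by simp_all
  have "0 \<le> C*u*u + 2*(-1)*u*v + D*v*v" for u v
    using valid_cm_mode_ineq[OF valid, of 2 u v] by (simp add: ww_cm_def algebra_simps)
  from binary_form_nonneg_D[OF this] show "1 \<le> C*D" "0 \<le> D" by simp_all
  have "0 \<le> B*u*u + 2*(-F)*u*v + D*v*v" for u v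
    using mat_ge_on_pair[OF valid_cm_imp_mat_ge_0[OF valid], of 1 7 u v]
    by (simp add: ww_cm_def algebra_simps)
  from binary_form_nonneg_D(3)[OF this] show "F^2 \<le> B*D" by simp
  have form: "0 \<le> cm_form 8 ?G xi eta" for xi eta
    using valid unfolding valid_cm_iff_cm_form by simp
  \<comment> \<open>\<open>A h - D\<close> and \<open>C h - B\<close> are the 3 \<times> 3 principal minors of \<open>\<gamma> + i \<sigma>\<close> on
     \<open>x\<^sub>1, p\<^sub>1, p\<^sub>4\<close> and on \<open>p\<^sub>2, x\<^sub>3, p\<^sub>3\<close>\<close>
  have "0 \<le> cm_form 8 ?G (\<lambda>i. if i = 0 then h else 0) (\<lambda>i. if i = 1 then D else if i = 7 then F else 0)"
    by (rule form)
  also have "\<dots> = h*(A*h - D)"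
    unfolding cm_form_def by (subst double_sum_support[where S="{0,1,7}"])
      (auto simp: ww_cm_def sympl_def algebra_simps h_def power2_eq_square)
  finally show "0 \<le> h*(A*h - D)" .
  have "0 \<le> cm_form 8 ?G (\<lambda>i. if i = 4 then h else 0) (\<lambda>i. if i = 3 then F else if i = 5 then B else 0)"
    by (rule form)
  also have "\<dots> = h*(C*h - B)"
    unfolding cm_form_def by (subst double_sum_support[where S="{3,4,5}"])
      (auto simp: ww_cm_def sympl_def algebra_simps h_def power2_eq_square)
  finally show "0 \<le> h*(C*h - B)" .
qed

lemma sum_lessThan_4: "(\<Sum>i<4. f i) = f 0 + f 1 + f 2 + f (3::nat)"
  by (simp add: eval_nat_numeral ac_simps)

lemma sum_lessThan_8: "(\<Sum>i<8. f i) = f 0 + f 1 + f 2 + f 3 + f 4 + f 5 + f 6 + f (7::nat)"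
  by (simp add: eval_nat_numeral ac_simps)

definition squeezed_cm :: "real \<Rightarrow> nat \<Rightarrow> nat \<Rightarrow> real" where
  "squeezed_cm a i j = (if i = j then if even i then a else 1/a else 0)"

lemma valid_cm_squeezed_cm:
  assumes "0 < a"
  shows "valid_cm 2 (squeezed_cm a)"
  unfolding valid_cm_iff_cm_form
proof (intro conjI allI)
  show "sym_mat (2*2) (squeezed_cm a)" by (auto simp: sym_mat_def squeezed_cm_def)
  fix xi eta :: "nat \<Rightarrow> real"
  have coeffs: "0 \<le> a" "0 \<le> 1/a" "(-1)^2 \<le> a * (1/a)" "1^2 \<le> a * (1/a)" using assms by auto
  have "cm_form (2*2) (squeezed_cm a) xi eta =
      (a*xi 0*xi 0 + 2*(-1)*xi 0*eta 1 + (1/a)*eta 1*eta 1)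
    + (a*eta 0*eta 0 + 2*1*eta 0*xi 1 + (1/a)*xi 1*xi 1)
    + (a*xi 2*xi 2 + 2*(-1)*xi 2*eta 3 + (1/a)*eta 3*eta 3)
    + (a*eta 2*eta 2 + 2*1*eta 2*xi 3 + (1/a)*xi 3*xi 3)"
    by (simp add: cm_form_def sum_lessThan_4 squeezed_cm_def sympl_def algebra_simps)
  also have "\<dots> \<ge> 0"
    using binary_form_nonneg_I[OF coeffs(1,2,3)] binary_form_nonneg_I[OF coeffs(1,2,4)]
    by (smt (verit))
  finally show "0 \<le> cm_form (2*2) (squeezed_cm a) xi eta" .
qed

lemma ww_cm_separable_if:
  fixes A B C D E F a c :: real
  assumes "0 < a" "0 < c"
    and x_block: "0 \<le> A - a" "0 \<le> C - c" "E^2 \<le> (A - a)*(C - c)"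
    and p_block: "0 \<le> B - 1/a" "0 \<le> D - 1/c" "F^2 \<le> (B - 1/a)*(D - 1/c)"
  shows "gaussian_separable 2 2 (ww_cm A B C D E F)"
  unfolding gaussian_separable_def
proof (intro exI conjI)
  show "valid_cm 2 (squeezed_cm a)" "valid_cm 2 (squeezed_cm c)"
    using assms(1,2) by (simp_all add: valid_cm_squeezed_cm)
  have x_block': "(-E)^2 \<le> (A - a)*(C - c)" and p_block': "(-F)^2 \<le> (B - 1/a)*(D - 1/c)"
    using x_block p_block by simp_all
  show "mat_ge (2*(2+2)) (ww_cm A B C D E F) (block_diag (2*2) (squeezed_cm a) (squeezed_cm c))"
    unfolding mat_ge_def
  proof
    fix x :: "nat \<Rightarrow> real"
    have "(\<Sum>i<2*(2+2). \<Sum>j<2*(2+2).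
        x i * (ww_cm A B C D E F i j - block_diag (2*2) (squeezed_cm a) (squeezed_cm c) i j) * x j)
      = ((A-a)*x 0*x 0 + 2*E*x 0*x 4 + (C-c)*x 4*x 4)
      + ((A-a)*x 2*x 2 + 2*(-E)*x 2*x 6 + (C-c)*x 6*x 6)
      + ((B-1/a)*x 1*x 1 + 2*(-F)*x 1*x 7 + (D-1/c)*x 7*x 7)
      + ((B-1/a)*x 3*x 3 + 2*(-F)*x 3*x 5 + (D-1/c)*x 5*x 5)"
      by (simp add: sum_lessThan_8 ww_cm_def block_diag_def squeezed_cm_def algebra_simps)
    also have "\<dots> \<ge> 0"
      using binary_form_nonneg_I[OF x_block] binary_form_nonneg_I[OF x_block(1,2) x_block']
        binary_form_nonneg_I[OF p_block(1,2) p_block'] by (smt (verit))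
    finally show "0 \<le> (\<Sum>i<2*(2+2). \<Sum>j<2*(2+2).
        x i * (ww_cm A B C D E F i j - block_diag (2*2) (squeezed_cm a) (squeezed_cm c) i j) * x j)" .
  qed
qed

lemma product_bound_split:
  fixes P R e f :: real
  assumes "0 \<le> P" "0 \<le> R" "0 \<le> e" "0 \<le> f" and bound: "(e + f)^2 \<le> P*R"
  obtains s t where "0 \<le> s" "s \<le> P" "0 \<le> t" "t \<le> R" "f^2 \<le> s*t" "e^2 \<le> (P - s)*(R - t)"
proof (cases "e + f = 0")
  case True
  then have "e = 0" "f = 0" using assms by auto
  then show ?thesis using that[of 0 0] assms by simp
next
  case False
  define l where "l = f/(e + f)"
  have l: "0 \<le> l" "l \<le> 1" unfolding l_def using assms False by auto
  have "f = l*(e + f)" "e = (1 - l)*(e + f)" unfolding l_def using False by (simp_all add: field_simps)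
  then have "f^2 = l^2*(e + f)^2" "e^2 = (1 - l)^2*(e + f)^2" by (metis power_mult_distrib)+
  moreover have "l^2*(e + f)^2 \<le> l^2*(P*R)" "(1 - l)^2*(e + f)^2 \<le> (1 - l)^2*(P*R)"
    using bound by (simp_all add: mult_left_mono)
  moreover have "l^2*(P*R) = (l*P)*(l*R)" "(1 - l)^2*(P*R) = (P - l*P)*(R - l*R)"
    by (simp_all add: algebra_simps power2_eq_square)
  ultimately have "f^2 \<le> (l*P)*(l*R)" "e^2 \<le> (P - l*P)*(R - l*R)"
    by simp_all
  moreover have "0 \<le> l*P" "l*P \<le> P" "0 \<le> l*R" "l*R \<le> R"
    using l assms by (simp_all add: mult_left_le_one_le)
  ultimately show ?thesis using that by blast
qed

lemma ww_cm_separable_if_split: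
  fixes A B C D E F s t :: real
  defines "h \<equiv> B*D - F^2"
  assumes "0 < h" "0 < B" "0 < D"
    and "0 \<le> s" "s \<le> h*A - D" "0 \<le> t" "t \<le> h*C - B"
    and "F^2 \<le> s*t" "h^2*E^2 \<le> (h*A - D - s)*(h*C - B - t)"
  shows "gaussian_separable 2 2 (ww_cm A B C D E F)"
proof -
  let ?a = "(D + s)/h" and ?c = "(B + t)/h"
  have Aa: "A - ?a = (h*A - D - s)/h" and Cc: "C - ?c = (h*C - B - t)/h"
    using assms(2) by (simp_all add: field_simps)
  have Ba: "B - 1/?a = (B*s + F^2)/(D + s)" and Dc: "D - 1/?c = (D*t + F^2)/(B + t)"
    using assms(2-8) unfolding h_def by (simp_all add: field_simps)
  have "(B*s + F^2)*(D*t + F^2) - F^2*((D + s)*(B + t)) = h*(s*t - F^2)"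
    unfolding h_def by (simp add: algebra_simps power2_eq_square)
  then have "F^2*((D + s)*(B + t)) \<le> (B*s + F^2)*(D*t + F^2)"
    using assms(2,9) by (smt (verit) mult_nonneg_nonneg)
  moreover have "0 < (D + s)*(B + t)" using assms(3-8) by simp
  ultimately have p_block: "F^2 \<le> (B - 1/?a)*(D - 1/?c)"
    unfolding Ba Dc by (simp add: pos_le_divide_eq mult.commute)
  have "E^2 \<le> (h*A - D - s)*(h*C - B - t)/h^2"
    using assms(2,10) by (simp add: pos_le_divide_eq mult.commute)
  then have x_block: "E^2 \<le> (A - ?a)*(C - ?c)"
    unfolding Aa Cc by (simp add: power2_eq_square)
  have "0 < ?a" "0 < ?c" "0 \<le> A - ?a" "0 \<le> C - ?c"
    unfolding Aa Cc using assms(2-8) by simp_all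
  moreover have "0 \<le> B - 1/?a" "0 \<le> D - 1/?c"
    unfolding Ba Dc using assms(3-8) by simp_all
  ultimately show ?thesis using x_block p_block by (intro ww_cm_separable_if)
qed

lemma ww_cm_separable_if_criterion:
  fixes A B C D E F :: real
  assumes valid: "valid_cm 4 (ww_cm A B C D E F)"
    and criterion: "(A*C - E^2)*(B*D - F^2) - 2*\<bar>E*F\<bar> - C*D - A*B + 1 \<ge> 0"
  shows "gaussian_separable 2 2 (ww_cm A B C D E F)"
proof -
  define h where "h = B*D - F^2"
  note facts = ww_cm_valid_imp[OF valid, folded h_def]
  have "1 \<le> (A*C - E^2)*h"
    using criterion facts(1,3) abs_ge_zero[of "E*F"] unfolding h_def by linarith
  then have h: "0 < h" using facts(5) unfolding h_def by (cases "B*D - F^2 = 0") auto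
  have B: "0 < B" and D: "0 < D" using facts(1-4) by (auto simp: order.order_iff_strict)
  have P: "0 \<le> h*A - D" and R: "0 \<le> h*C - B"
    using facts(6,7) h by (simp_all add: zero_le_mult_iff mult.commute)
  have "(h*A - D)*(h*C - B) - (h*\<bar>E\<bar> + \<bar>F\<bar>)^2
      = h*((A*C - E^2)*(B*D - F^2) - 2*\<bar>E*F\<bar> - C*D - A*B + 1)"
    unfolding h_def by (simp add: algebra_simps power2_eq_square abs_mult)
  with h criterion have "(h*\<bar>E\<bar> + \<bar>F\<bar>)^2 \<le> (h*A - D)*(h*C - B)"
    by (smt (verit) mult_nonneg_nonneg)
  moreover have "0 \<le> h*\<bar>E\<bar>" using h by simp
  ultimately obtain s t where "0 \<le> s" "s \<le> h*A - D" "0 \<le> t" "t \<le> h*C - B"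
    "\<bar>F\<bar>^2 \<le> s*t" "(h*\<bar>E\<bar>)^2 \<le> (h*A - D - s)*(h*C - B - t)"
    using product_bound_split[OF P R _ abs_ge_zero] by blast
  then show ?thesis
    using ww_cm_separable_if_split[OF _ B D] h unfolding h_def by (simp add: power_mult_distrib)
qed

theorem mainTheorem4:
  fixes A B C D E F :: real
  assumes "valid_cm 4 (ww_cm A B C D E F)"
  shows "gaussian_separable 2 2 (ww_cm A B C D E F) \<longleftrightarrow>
         (A*C - E^2)*(B*D - F^2) - 2*\<bar>E*F\<bar> - C*D - A*B + 1 \<ge> 0"
proof
  assume separable: "gaussian_separable 2 2 (ww_cm A B C D E F)"
  define f where "f = (if 0 \<le> E*F then F else -F)"
  have "f = F \<or> f = -F" "f^2 = F^2" "E*f = \<bar>E*F\<bar>" unfolding f_def by auto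
  with ww_cm_separable_imp[OF separable, of f]
  show "(A*C - E^2)*(B*D - F^2) - 2*\<bar>E*F\<bar> - C*D - A*B + 1 \<ge> 0" by simp
next
  assume "(A*C - E^2)*(B*D - F^2) - 2*\<bar>E*F\<bar> - C*D - A*B + 1 \<ge> 0"
  with assms show "gaussian_separable 2 2 (ww_cm A B C D E F)"
    by (rule ww_cm_separable_if_criterion)
qed

end
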